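(* Let $g$ be a positive integer and $t\ge 1$. Let $t=\sum_{i=1}^m 2^{u_i}$ be the binary expansion of $t$ with $0\le u_1<u_2<\cdots<u_m$, let $s_k=\sum_{i=k}^m 2^{u_i}$ for $k=1,\ldots,m$, and let $u_0=-1$. Then for $s\in\{1,\ldots,t\}$, $h_t(s)=1$ if and only if $s=s_k-j2^u$ for some $k\in\{1,\ldots,m\}$, some integer $u$ with $u_{k-1}<u\le u_k$ and some $j\in\{0,\ldots,g-1\}$ such that $2^u$ is the largest power of $2$ dividing $s$; in particular $j$ is even if $u=u_k$ and odd otherwise. As a consequence, at any time instant $t$ there are at most $\lceil g/2\rceil(\lfloor\log t\rfloor+1)$ segments that are valid and alive.
   Context: $\log$ denotes base-2 logarithm. For a parameter $g$ and integers $s\ge1$, $t\ge1$: write $s=o2^u$ with $o$ odd and $u\ge0$ (so $2^u$ is the largest power of 2 dividing $s$), and set $h_t(s)=1$ if $s\le t<s+g2^u$ and $h_t(s)=0$ otherwise. Markov weights: given switch probabilities $p(t|t')\in(0,1)$ for $1\le t'<t$, let $\{U_t\}$ be the Markov chain with $U_1=1$ and, for $t'<t$, $\Pr(U_t=t\mid U_{t-1}=t')=p(t|t')=1-\Pr(U_t=t'\mid U_{t-1}=t')$. A transition path $T=(t_1,\ldots,t_C;t)$ (with $1<t_1<\cdots<t_C\le t$) corresponds to the realization $(u_1,\ldots,u_t)$ with $u_{k-1}\ne u_k$ exactly for $k\in\{t_1,\ldots,t_C\}$, and the weight is $w_t(T)=\Pr(U_1=u_1,\ldots,U_t=u_t)$.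 The pruned switch probabilities are $\hat p(t|t')=1-h_t(t')(1-p(t|t'))$, and $\hat w_t$ is the weight function obtained from $\hat p$ in the same way. The segments of a path $T\in\mathcal T_t$ are the intervals $[t_c,t_{c+1})$ between consecutive switch points (with $t_0=1$). A segment is alive at time $t$ if it contains $t$, and valid if there is a path $T_t$ with $\hat w_t(T_t)>0$ that contains exactly that segment. *)

theory Defs
  imports Complex_Main "HOL-Computational_Algebra.Primes"
begin

definition h :: "nat \<Rightarrow> nat \<Rightarrow> nat \<Rightarrow> nat" where
  "h g t s = (if s \<le> t \<and> t < s + g * 2 ^ multiplicity (2::nat) s then 1 else 0)"

definition tail_sum :: "(nat \<Rightarrow> nat) \<Rightarrow> nat \<Rightarrow> nat \<Rightarrow> nat" where
  "tail_sum uu m k = (\<Sum>i=k..m. 2 ^ uu i)"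

text \<open>Transition paths up to time t: a path (t_1,...,t_C; t) with 1 < t_1 < ... < t_C \<le> t
  is represented by its set of switch points T \<subseteq> {2..t}.\<close>
definition paths :: "nat \<Rightarrow> nat set set" where
  "paths t = {T. T \<subseteq> {2..t}}"

text \<open>The realization (u_1,...,u_t) of a path: u_k is the last switch point \<le> k (or 1).\<close>
definition realization :: "nat set \<Rightarrow> nat \<Rightarrow> nat" where
  "realization T k = Max (insert 1 {c \<in> T. c \<le> k})"

text \<open>Markov weight w_t(T) = Pr(U_1=u_1,...,U_t=u_t) for the chain with U_1 = 1 and
  Pr(U_k = k | U_{k-1} = t') = q k t', Pr(U_k = t' | U_{k-1} = t') = 1 - q k t'.
  (q k t' stands for the switch probability q(k|t').)\<close>
definition weight :: "(nat \<Rightarrow> nat \<Rightarrow> real) \<Rightarrow> nat \<Rightarrow> nat set \<Rightarrow> real" where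
  "weight q t T = (\<Prod>k\<in>{2..t}. if k \<in> T then q k (realization T (k - 1))
                                   else 1 - q k (realization T (k - 1)))"

definition phat :: "nat \<Rightarrow> (nat \<Rightarrow> nat \<Rightarrow> real) \<Rightarrow> nat \<Rightarrow> nat \<Rightarrow> real" where
  "phat g p t t' = 1 - real (h g t t') * (1 - p t t')"

text \<open>Segments of a path T in paths t: intervals [t_c, t_{c+1}) between consecutive
  points of 1 = t_0 < t_1 < ... < t_C < t_{C+1} = t + 1.\<close>
definition segments :: "nat \<Rightarrow> nat set \<Rightarrow> nat set set" where
  "segments t T = {{a..<b} | a b. a \<in> insert 1 T \<and> b \<in> insert (Suc t) T \<and> a < b
                      \<and> (\<forall>c\<in>T. \<not> (a < c \<and> c < b))}"

definition valid_alive :: "nat \<Rightarrow> (nat \<Rightarrow> nat \<Rightarrow> real) \<Rightarrow> nat \<Rightarrow> nat set set" where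
  "valid_alive g p t = {S. t \<in> S \<and> (\<exists>T\<in>paths t. weight (phat g p) t T > 0 \<and> S \<in> segments t T)}"

end

theory Submission
  imports Defs
begin

text \<open>
  Let s_k be the tail sum and r_k = t - s_k the sum of the lower binary digits of t.
  If 2^u is the exact power of 2 dividing s and u_{k-1} < u \<le> u_k, then s and s_k are
  multiples of 2^u while r_k < 2^u, so at resolution 2^u the window s \<le> t < s + g 2^u
  reads s_k = s + j 2^u with j < g.  As s / 2^u and s_k / 2^{u_k} are odd, j is even
  exactly when u = u_k.

  A segment alive at t is [a, t], and for a < t it survives only if the pruned weight of
  staying in it at time t is positive, i.e. h_t(a) = 1.  Such an a is determined by its
  2-adic valuation u \<le> \<lfloor>log t\<rfloor> and its odd part, which lies in a window of g
  consecutive integers ending at \<lfloor>t / 2^u\<rfloor> and hence takes at most \<lceil>g/2\<rceil> values.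
\<close>

lemma mult_add_less_mult_iff:
  fixes d b c r :: nat
  assumes "r < d"
  shows "d * b + r < d * c \<longleftrightarrow> b < c"
proof
  assume "d * b + r < d * c"
  then have "d * b < d * c" by linarith
  then show "b < c" by simp
next
  assume "b < c"
  then have "d * Suc b \<le> d * c" by (intro mult_le_mono2) simp
  then show "d * b + r < d * c" using assms by simp
qed

lemma window_iff_multiple:
  fixes d s T r g :: nat
  assumes "d dvd s" "d dvd T" "r < d"
  shows "s \<le> T + r \<and> T + r < s + g * d \<longleftrightarrow> (\<exists>j<g. T = s + j * d)"
proof -
  obtain a b where s: "s = d * a" and T: "T = d * b" using assms(1,2) by (auto elim!: dvdE)
  have "s \<le> T + r \<longleftrightarrow> a \<le> b"
    using mult_add_less_mult_iff[OF assms(3), of b a] s T by (simp add: not_less[symmetric])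
  moreover have "T + r < s + g * d \<longleftrightarrow> b < a + g"
    using mult_add_less_mult_iff[OF assms(3), of b "a + g"] s T by (simp add: algebra_simps)
  moreover have "(\<exists>j<g. T = s + j * d) \<longleftrightarrow> (\<exists>j<g. b = a + j)"
  proof -
    have "d > 0" using assms(3) by simp
    then have "T = s + j * d \<longleftrightarrow> b = a + j" for j
      using s T by (metis add_mult_distrib2 mult.commute nat_mult_eq_cancel1)
    then show ?thesis by simp
  qed
  moreover have "(\<exists>j<g. b = a + j) \<longleftrightarrow> a \<le> b \<and> b < a + g"
    by (metis add_less_cancel_left le_add1 le_add_diff_inverse)
  ultimately show ?thesis by blast
qed

lemma exactly_dvd_iff_multiplicity:
  fixes s u :: nat
  assumes "s \<noteq> 0"
  shows "2 ^ u dvd s \<and> \<not> 2 ^ Suc u dvd s \<longleftrightarrow> multiplicity 2 s = u"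
proof -
  have "2 ^ n dvd s \<longleftrightarrow> n \<le> multiplicity 2 s" for n
    using assms by (intro power_dvd_iff_le_multiplicity) auto
  then show ?thesis by (auto simp del: power_Suc)
qed

lemma sum_pow_less_pow_Suc:
  fixes uu :: "nat \<Rightarrow> nat"
  assumes "strict_mono_on {1..m} uu" and "k \<in> {1..m}"
  shows "(\<Sum>i=1..k. (2::nat) ^ uu i) < 2 ^ Suc (uu k)"
  using assms(2)
proof (induction k)
  case (Suc k)
  show ?case
  proof (cases "k = 0")
    case False
    then have "uu k < uu (Suc k)"
      using strict_mono_onD[OF assms(1), of k "Suc k"] Suc.prems by auto
    then have "(2::nat) ^ Suc (uu k) \<le> 2 ^ uu (Suc k)" by (intro power_increasing) auto
    then show ?thesis using Suc False by simp
  qed simp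
qed simp

lemma sum_eq_tail_sum_add_head:
  fixes uu :: "nat \<Rightarrow> nat"
  assumes "k \<in> {1..m}"
  shows "(\<Sum>i=1..m. (2::nat) ^ uu i) = tail_sum uu m k + (\<Sum>i=1..<k. 2 ^ uu i)"
proof -
  have "{1..m} = {1..<k} \<union> {k..m}" using assms by auto
  then show ?thesis unfolding tail_sum_def by (simp add: sum.union_disjoint ivl_disj_int)
qed

lemma head_sum_less_pow:
  fixes uu :: "nat \<Rightarrow> nat"
  assumes "strict_mono_on {1..m} uu" and "k \<in> {1..m}" and "k = 1 \<or> uu (k - 1) < u"
  shows "(\<Sum>i=1..<k. (2::nat) ^ uu i) < 2 ^ u"
proof (cases "k = 1")
  case False
  then have "{1..<k} = {1..k - 1}" and "k - 1 \<in> {1..m}" using assms(2) by auto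
  moreover have "(2::nat) ^ Suc (uu (k - 1)) \<le> 2 ^ u"
    using assms(3) False by (intro power_increasing) auto
  ultimately show ?thesis using sum_pow_less_pow_Suc[OF assms(1), of "k - 1"] by simp
qed simp

lemma tail_sum_odd_part:
  fixes uu :: "nat \<Rightarrow> nat"
  assumes "strict_mono_on {1..m} uu" and "k \<in> {1..m}"
  obtains c where "odd c" and "tail_sum uu m k = 2 ^ uu k * c"
proof -
  have "(2::nat) ^ Suc (uu k) dvd (\<Sum>i=Suc k..m. 2 ^ uu i)"
  proof (rule dvd_sum)
    fix i assume "i \<in> {Suc k..m}"
    then have "uu k < uu i" using strict_mono_onD[OF assms(1), of k i] assms(2) by auto
    then show "(2::nat) ^ Suc (uu k) dvd 2 ^ uu i" by (intro le_imp_power_dvd) simp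
  qed
  then obtain c where "(\<Sum>i=Suc k..m. (2::nat) ^ uu i) = 2 ^ uu k * (2 * c)" by auto
  moreover have "tail_sum uu m k = 2 ^ uu k + (\<Sum>i=Suc k..m. 2 ^ uu i)"
    unfolding tail_sum_def using assms(2) by (simp add: sum.atLeast_Suc_atMost)
  ultimately show ?thesis using that[of "2 * c + 1"] by (simp add: algebra_simps)
qed

lemma exists_block_containing:
  fixes uu :: "nat \<Rightarrow> nat"
  assumes "1 \<le> m" and "u \<le> uu m"
  obtains k where "k \<in> {1..m}" and "k = 1 \<or> uu (k - 1) < u" and "u \<le> uu k"
proof -
  define k where "k = (LEAST k. k \<in> {1..m} \<and> u \<le> uu k)"
  have k: "k \<in> {1..m} \<and> u \<le> uu k"
    unfolding k_def by (rule LeastI[of _ m]) (use assms in auto)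
  have "k = 1 \<or> uu (k - 1) < u"
    using not_less_Least[of "k - 1" "\<lambda>k. k \<in> {1..m} \<and> u \<le> uu k", folded k_def] k
    by (cases "k = 1") auto
  then show ?thesis using that k by blast
qed

lemma h_eq_1_iff_tail_sum:
  fixes uu :: "nat \<Rightarrow> nat"
  assumes "strict_mono_on {1..m} uu" and "t = (\<Sum>i=1..m. 2 ^ uu i)"
    and "k \<in> {1..m}" and "k = 1 \<or> uu (k - 1) < u" and "u \<le> uu k"
    and "multiplicity 2 s = u"
  shows "h g t s = 1 \<longleftrightarrow> (\<exists>j<g. tail_sum uu m k = s + j * 2 ^ u)"
proof -
  obtain c where "tail_sum uu m k = 2 ^ uu k * c" using tail_sum_odd_part[OF assms(1,3)] .
  then have "2 ^ u dvd tail_sum uu m k" using assms(5) by (simp add: le_imp_power_dvd)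
  moreover have "2 ^ u dvd s" using multiplicity_dvd[of 2 s] assms(6) by simp
  ultimately show ?thesis
    using window_iff_multiple[OF _ _ head_sum_less_pow[OF assms(1,3,4)], of s "tail_sum uu m k" g]
      sum_eq_tail_sum_add_head[OF assms(3), of uu] assms(2,6)
    by (simp add: h_def mult.commute)
qed

lemma int_eq_diff_iff_eq_add:
  fixes s T j d :: nat
  shows "int s = int T - int j * 2 ^ d \<longleftrightarrow> T = s + j * 2 ^ d"
proof -
  have "int (s + j * 2 ^ d) = int s + int j * 2 ^ d" by simp
  then show ?thesis by linarith
qed

lemma h_eq_1_iff_representation:
  fixes uu :: "nat \<Rightarrow> nat"
  assumes sm: "strict_mono_on {1..m} uu" and binexp: "t = (\<Sum>i=1..m. 2 ^ uu i)"
    and s: "s \<in> {1..t}"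
  shows "h g t s = 1 \<longleftrightarrow>
    (\<exists>k\<in>{1..m}. \<exists>u j. (k = 1 \<or> uu (k - 1) < u) \<and> u \<le> uu k \<and> j < g
       \<and> int s = int (tail_sum uu m k) - int j * 2 ^ u
       \<and> 2 ^ u dvd s \<and> \<not> 2 ^ Suc u dvd s)"
    (is "_ \<longleftrightarrow> (\<exists>k\<in>{1..m}. \<exists>u j. ?rep k u j)")
proof
  assume h: "h g t s = 1"
  define u where "u = multiplicity 2 s"
  have "1 \<le> m" using binexp s by (cases m) auto
  have "2 ^ u \<le> s" using multiplicity_dvd[of 2 s] s unfolding u_def by (simp add: dvd_imp_le)
  also have "s \<le> t" using h by (simp add: h_def split: if_splits)
  also have "t < 2 ^ Suc (uu m)" using sum_pow_less_pow_Suc[OF sm, of m] \<open>1 \<le> m\<close> binexp by simp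
  finally have "u \<le> uu m" by (simp del: power_Suc)
  then obtain k where k: "k \<in> {1..m}" "k = 1 \<or> uu (k - 1) < u" "u \<le> uu k"
    using exists_block_containing \<open>1 \<le> m\<close> by blast
  then obtain j where "j < g" "tail_sum uu m k = s + j * 2 ^ u"
    using h h_eq_1_iff_tail_sum[OF sm binexp k u_def[symmetric]] by blast
  moreover have "2 ^ u dvd s \<and> \<not> 2 ^ Suc u dvd s"
    using exactly_dvd_iff_multiplicity s u_def by simp
  ultimately have "?rep k u j" using k int_eq_diff_iff_eq_add by simp
  then show "\<exists>k\<in>{1..m}. \<exists>u j. ?rep k u j" using k by blast
next
  assume "\<exists>k\<in>{1..m}. \<exists>u j. ?rep k u j"
  then obtain k u j where k: "k \<in> {1..m}" and rep: "?rep k u j" by blast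
  then have "multiplicity 2 s = u" using exactly_dvd_iff_multiplicity s by simp
  then show "h g t s = 1"
    using h_eq_1_iff_tail_sum[OF sm binexp k] rep int_eq_diff_iff_eq_add by auto
qed

lemma representation_parity:
  fixes uu :: "nat \<Rightarrow> nat"
  assumes "strict_mono_on {1..m} uu" and "k \<in> {1..m}" and "u \<le> uu k"
    and "tail_sum uu m k = s + j * 2 ^ u" and "2 ^ u dvd s" and "\<not> 2 ^ Suc u dvd s"
  shows "even j \<longleftrightarrow> u = uu k"
proof -
  obtain c where "odd c" and c: "tail_sum uu m k = 2 ^ uu k * c"
    using tail_sum_odd_part[OF assms(1,2)] .
  obtain a where a: "s = 2 ^ u * a" using assms(5) ..
  have "odd a" using assms(6) a by (auto simp: mult.assoc)
  have "2 ^ u * (2 ^ (uu k - u) * c) = 2 ^ u * (a + j)"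
    using assms(3,4) a c by (simp add: power_add[symmetric] algebra_simps)
  then have "2 ^ (uu k - u) * c = a + j" by simp
  have "even j \<longleftrightarrow> odd (a + j)" using \<open>odd a\<close> by simp
  also have "\<dots> \<longleftrightarrow> \<not> u < uu k" using \<open>2 ^ (uu k - u) * c = a + j\<close>[symmetric] \<open>odd c\<close> by simp
  also have "\<dots> \<longleftrightarrow> u = uu k" using assms(3) by simp
  finally show ?thesis .
qed

lemma alive_segment_of_path:
  assumes "T \<in> paths t" and "S \<in> segments t T" and "t \<in> S"
  obtains a where "S = {a..<Suc t}" and "a \<in> insert 1 T" and "1 \<le> a" and "a \<le> t"
    and "\<forall>c\<in>T. c \<le> a"
proof -
  have T: "T \<subseteq> {2..t}" using assms(1) by (simp add: paths_def)
  obtain a b where S: "S = {a..<b}" and a: "a \<in> insert 1 T" and b: "b \<in> insert (Suc t) T"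
    and gap: "\<forall>c\<in>T. \<not> (a < c \<and> c < b)"
    using assms(2) by (auto simp: segments_def)
  have "a \<le> t" "t < b" using assms(3) S by auto
  then have "b = Suc t" using b T by auto
  moreover have "\<forall>c\<in>T. c \<le> a"
    using gap T \<open>b = Suc t\<close> by (metis atLeastAtMost_iff less_Suc_eq_le not_le subsetD)
  moreover have "1 \<le> a" using a T by auto
  ultimately show ?thesis using that S a \<open>a \<le> t\<close> by blast
qed

lemma realization_eq_last_switch:
  assumes "a \<in> insert 1 T" and "1 \<le> a" and "a \<le> k" and "\<forall>c\<in>T. c \<le> k \<longrightarrow> c \<le> a"
  shows "realization T k = a"
  unfolding realization_def
proof (rule Max_eqI)
  show "finite (insert 1 {c \<in> T. c \<le> k})"
    by (rule finite_subset[of _ "{..max 1 k}"]) auto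
qed (use assms in auto)

lemma weight_pos_imp_switch_prob_ne_1:
  assumes "weight q t T > 0" and "k \<in> {2..t}" and "k \<notin> T"
  shows "q k (realization T (k - 1)) \<noteq> 1"
proof -
  have "weight q t T \<noteq> 0" using assms(1) by simp
  then have "\<forall>k\<in>{2..t}. (if k \<in> T then q k (realization T (k - 1))
                              else 1 - q k (realization T (k - 1))) \<noteq> 0"
    by (simp add: weight_def)
  then show ?thesis using assms(2,3) by fastforce
qed

lemma valid_alive_subset_h:
  assumes "g > 0"
  shows "valid_alive g p t \<subseteq> (\<lambda>a. {a..<Suc t}) ` {a\<in>{1..t}. h g t a = 1}"
proof
  fix S assume "S \<in> valid_alive g p t"
  then obtain T where T: "T \<in> paths t" and w: "weight (phat g p) t T > 0"
    and S: "S \<in> segments t T" "t \<in> S" by (auto simp: valid_alive_def)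
  obtain a where Sa: "S = {a..<Suc t}" and a: "a \<in> insert 1 T" "1 \<le> a" "a \<le> t"
    and last: "\<forall>c\<in>T. c \<le> a"
    using alive_segment_of_path[OF T S] .
  have "h g t a = 1"
  proof (cases "a = t")
    case True
    then show ?thesis using assms by (simp add: h_def)
  next
    case False
    then have "t \<in> {2..t}" "t \<notin> T" using a last by auto
    moreover have "realization T (t - 1) = a"
      using False a last by (intro realization_eq_last_switch) auto
    ultimately have "phat g p t a \<noteq> 1" using weight_pos_imp_switch_prob_ne_1[OF w] by metis
    then show ?thesis by (simp add: phat_def h_def split: if_splits)
  qed
  then show "S \<in> (\<lambda>a. {a..<Suc t}) ` {a\<in>{1..t}. h g t a = 1}" using Sa a by auto
qed

lemma card_odd_in_window:
  fixes a g :: nat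
  shows "card {x. odd x \<and> a \<le> x \<and> x < a + g} \<le> (g + 1) div 2"
proof -
  have "{x. odd x \<and> a \<le> x \<and> x < a + g} \<subseteq> (\<lambda>c. 2 * c + 1) ` {a div 2..<(a + g) div 2}"
  proof
    fix x assume x: "x \<in> {x. odd x \<and> a \<le> x \<and> x < a + g}"
    then have "x = 2 * (x div 2) + 1" "x div 2 \<in> {a div 2..<(a + g) div 2}" by auto presburger+
    then show "x \<in> (\<lambda>c. 2 * c + 1) ` {a div 2..<(a + g) div 2}" by blast
  qed
  then have "card {x. odd x \<and> a \<le> x \<and> x < a + g} \<le> card ((\<lambda>c. 2 * c + 1) ` {a div 2..<(a + g) div 2})"
    by (intro card_mono) auto
  also have "\<dots> \<le> card {a div 2..<(a + g) div 2}" by (rule card_image_le) simp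
  also have "\<dots> \<le> (g + 1) div 2" by simp
  finally show ?thesis .
qed

lemma card_h_eq_1_le:
  assumes "t < 2 ^ Suc L"
  shows "card {a\<in>{1..t}. h g t a = 1} \<le> (L + 1) * ((g + 1) div 2)"
proof -
  define A where "A = {a\<in>{1..t}. h g t a = 1}"
  define split2 where "split2 = (\<lambda>a::nat. (multiplicity 2 a, a div 2 ^ multiplicity 2 a))"
  \<comment> \<open>W u holds the odd parts x of points with valuation u, as x \<le> t div 2^u < x + g.\<close>
  define W where "W = (\<lambda>u. {x. odd x \<and> t div 2 ^ u + 1 - g \<le> x \<and> x < (t div 2 ^ u + 1 - g) + g})"
  have "inj_on split2 A"
  proof (rule inj_onI)
    fix a b assume "split2 a = split2 b"
    then show "a = b"
      using multiplicity_dvd[of 2 a] multiplicity_dvd[of 2 b] unfolding split2_def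
      by (metis dvd_mult_div_cancel prod.inject)
  qed
  moreover have "split2 ` A \<subseteq> Sigma {0..L} W"
  proof
    fix y assume "y \<in> split2 ` A"
    then obtain a where a: "a \<in> A" and y: "y = split2 a" by blast
    define u where "u = multiplicity 2 a"
    define x where "x = a div 2 ^ u"
    have "a \<noteq> 0" and "a \<le> t" and "t < a + g * 2 ^ u"
      using a unfolding A_def h_def u_def by (auto split: if_splits)
    have ax: "a = 2 ^ u * x" unfolding x_def u_def using multiplicity_dvd[of 2 a] by simp
    have "odd x" unfolding x_def u_def using multiplicity_decompose[OF \<open>a \<noteq> 0\<close>, of 2] by simp
    then have "2 ^ u \<le> a" using ax by (cases x) auto
    then have "(2::nat) ^ u < 2 ^ Suc L" using \<open>a \<le> t\<close> assms by linarith
    then have "u \<le> L" by (simp del: power_Suc)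
    have "x \<le> t div 2 ^ u" unfolding x_def using \<open>a \<le> t\<close> by (rule div_le_mono)
    moreover have "t div 2 ^ u < x + g"
      using \<open>t < a + g * 2 ^ u\<close> ax by (intro less_mult_imp_div_less) (simp add: algebra_simps)
    ultimately have "x \<in> W u" unfolding W_def using \<open>odd x\<close> by auto
    then show "y \<in> Sigma {0..L} W" using y \<open>u \<le> L\<close> unfolding split2_def u_def x_def by auto
  qed
  moreover have "finite (W u)" for u
    unfolding W_def by (rule finite_subset[of _ "{..<t div 2 ^ u + 1 - g + g}"]) auto
  ultimately have "card A \<le> card (Sigma {0..L} W)"
    by (metis card_image card_mono finite_SigmaI finite_atLeastAtMost)
  also have "\<dots> = (\<Sum>u=0..L. card (W u))" using \<open>\<And>u. finite (W u)\<close> by (simp add: card_SigmaI)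
  also have "\<dots> \<le> (\<Sum>u=0..L. (g + 1) div 2)" unfolding W_def by (intro sum_mono card_odd_in_window)
  finally show ?thesis by (simp add: A_def)
qed

lemma card_valid_alive_le:
  assumes "g > 0" and "t < 2 ^ Suc L"
  shows "card (valid_alive g p t) \<le> (L + 1) * ((g + 1) div 2)"
proof -
  have "card (valid_alive g p t) \<le> card ((\<lambda>a. {a..<Suc t}) ` {a\<in>{1..t}. h g t a = 1})"
    using valid_alive_subset_h[OF assms(1)] by (intro card_mono) auto
  also have "\<dots> \<le> card {a\<in>{1..t}. h g t a = 1}" by (rule card_image_le) simp
  also have "\<dots> \<le> (L + 1) * ((g + 1) div 2)" using card_h_eq_1_le[OF assms(2)] .
  finally show ?thesis .
qed

lemma card_valid_alive_le_log:
  assumes "g > 0" and "2 ^ L \<le> t" and "t < 2 ^ Suc L"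
  shows "real (card (valid_alive g p t))
    \<le> real_of_int (\<lceil>real g / 2\<rceil> * (\<lfloor>log 2 (real t)\<rfloor> + 1))"
proof -
  have "real L \<le> log 2 (real t)"
    using assms(2) by (intro le_log_of_power) (simp_all flip: of_nat_le_iff)
  then have "int L + 1 \<le> \<lfloor>log 2 (real t)\<rfloor> + 1" by (simp add: le_floor_iff)
  moreover have "int ((g + 1) div 2) \<le> \<lceil>real g / 2\<rceil>" by (simp add: le_ceiling_iff)
  moreover have "int (card (valid_alive g p t)) \<le> int ((L + 1) * ((g + 1) div 2))"
    using card_valid_alive_le[OF assms(1,3)] by (simp only: of_nat_le_iff)
  then have "int (card (valid_alive g p t)) \<le> int ((g + 1) div 2) * (int L + 1)"
    by (simp add: algebra_simps)
  ultimately have "int (card (valid_alive g p t)) \<le> \<lceil>real g / 2\<rceil> * (\<lfloor>log 2 (real t)\<rfloor> + 1)"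
    by (meson mult_mono of_nat_0_le_iff order_trans le_add_same_cancel1 zero_le_one add_nonneg_nonneg)
  then show ?thesis by (metis of_int_le_iff of_int_of_nat_eq)
qed

theorem lemma2:
  fixes g t m :: nat and uu :: "nat \<Rightarrow> nat" and p :: "nat \<Rightarrow> nat \<Rightarrow> real"
  assumes g_pos: "g > 0"
    and t_ge: "t \<ge> 1"
    and uu_mono: "strict_mono_on {1..m} uu"
    and binexp: "t = (\<Sum>i=1..m. 2 ^ uu i)"
    and p_range: "\<forall>tt t'. 1 \<le> t' \<and> t' < tt \<longrightarrow> 0 < p tt t' \<and> p tt t' < 1"
  shows "(\<forall>s\<in>{1..t}. h g t s = 1 \<longleftrightarrow>
            (\<exists>k\<in>{1..m}. \<exists>u j. (k = 1 \<or> uu (k - 1) < u) \<and> u \<le> uu k \<and> j < g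
               \<and> int s = int (tail_sum uu m k) - int j * 2 ^ u
               \<and> 2 ^ u dvd s \<and> \<not> 2 ^ Suc u dvd s))
       \<and> (\<forall>s\<in>{1..t}. \<forall>k\<in>{1..m}. \<forall>u j. (k = 1 \<or> uu (k - 1) < u) \<and> u \<le> uu k \<and> j < g
               \<and> int s = int (tail_sum uu m k) - int j * 2 ^ u
               \<and> 2 ^ u dvd s \<and> \<not> 2 ^ Suc u dvd s
             \<longrightarrow> (u = uu k \<longrightarrow> even j) \<and> (u \<noteq> uu k \<longrightarrow> odd j))
       \<and> real (card (valid_alive g p t))
           \<le> real_of_int (\<lceil>real g / 2\<rceil> * (\<lfloor>log 2 (real t)\<rfloor> + 1))"
proof -
  have "1 \<le> m" using t_ge binexp by (cases m) auto
  have "2 ^ uu m \<le> t"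
    unfolding binexp using \<open>1 \<le> m\<close> by (intro member_le_sum[of m]) auto
  moreover have "t < 2 ^ Suc (uu m)"
    using sum_pow_less_pow_Suc[OF uu_mono, of m] \<open>1 \<le> m\<close> binexp by simp
  ultimately have bound: "real (card (valid_alive g p t))
      \<le> real_of_int (\<lceil>real g / 2\<rceil> * (\<lfloor>log 2 (real t)\<rfloor> + 1))"
    using card_valid_alive_le_log[OF g_pos] by blast
  have parity: "(u = uu k \<longrightarrow> even j) \<and> (u \<noteq> uu k \<longrightarrow> odd j)"
    if "k \<in> {1..m}" "u \<le> uu k" "int s = int (tail_sum uu m k) - int j * 2 ^ u"
      "2 ^ u dvd s" "\<not> 2 ^ Suc u dvd s" for s k u j
    using representation_parity[OF uu_mono that(1,2) _ that(4,5)] that(3)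
    by (simp add: int_eq_diff_iff_eq_add)
  show ?thesis
  proof (intro conjI)
    show "real (card (valid_alive g p t))
      \<le> real_of_int (\<lceil>real g / 2\<rceil> * (\<lfloor>log 2 (real t)\<rfloor> + 1))" by (rule bound)
  qed (use h_eq_1_iff_representation[OF uu_mono binexp] parity in blast)+
qed

end
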